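(* Let $k\in\mathbb{Z}^+$, let $G:\mathbb{R}\to\mathbb{R}$, and for real weights $\psi_1,\psi_2,\nu,\beta_i,\phi_{i,1},\phi_{i,2},\mu_i$ ($i=1,\dots,k$) let $g(y,e)=\nu+\sum_{i=1}^{k}\beta_iG(\phi_{i,1}y+\phi_{i,2}e+\mu_i)$. Consider the Markov chain $(x_t)$ on $\mathbb{R}^2$ defined by $$x_t=\Psi x_{t-1}+F(x_{t-1})+\Sigma\,\varepsilon_t,$$ where $x_t=(y_t,e_t)'$, $\Sigma=(1,1)'$, $\Psi=\begin{bmatrix}\psi_1&\psi_2\\0&0\end{bmatrix}$, $F(y,e)=(g(y,e),0)'$, and $(\varepsilon_t)$ is an i.i.d. sequence of real random variables. Suppose the distribution of $\varepsilon_t$ is absolutely continuous with respect to Lebesgue measure $\lambda$, with density $\nu(\cdot)$ that is positive everywhere on $\mathbb{R}$ and lower semi-continuous everywhere. Suppose moreover that (a) $G\in C^\infty$ is bounded, nonconstant and asymptotically constant, and (b) $\psi_1+\psi_2\neq 0$. Then the Markov chain $(x_t)$ is irreducible on the state space $(\mathbb{R}^2,\mathcal{B})$, where $\mathcal{B}$ is the Borel $\sigma$-field.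
   Context: This chain is the state-space form of the PARNN$(1,k,1)$ process $y_t=\psi_1y_{t-1}+\psi_2e_{t-1}+g(y_{t-1},e_{t-1})+\varepsilon_t$. A Markov chain on $(\mathcal{X},\mathcal{B})$, $\mathcal{X}\subseteq\mathbb{R}^2$, is called irreducible if $\sum_{t=1}^{\infty}P^t(x,\mathcal{A})>0$ for all $x\in\mathcal{X}$ whenever $\lambda(\mathcal{A})>0$, where $P^t(x,\mathcal{A})$ is the $t$-step transition probability from $x$ to $\mathcal{A}\in\mathcal{B}$ and $\lambda$ is Lebesgue measure. *)

theory Defs
  imports "HOL-Analysis.Analysis"
begin

definition lower_semicontinuous_everywhere :: "(real \<Rightarrow> real) \<Rightarrow> bool" where
  "lower_semicontinuous_everywhere f \<longleftrightarrow>
     (\<forall>x c. c < f x \<longrightarrow> eventually (\<lambda>y. c < f y) (at x))"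

definition C_infinity :: "(real \<Rightarrow> real) \<Rightarrow> bool" where
  "C_infinity f \<longleftrightarrow>
     (\<exists>D :: nat \<Rightarrow> real \<Rightarrow> real. D 0 = f \<and>
        (\<forall>n x. (D n has_real_derivative D (Suc n) x) (at x)))"

definition asymptotically_constant :: "(real \<Rightarrow> real) \<Rightarrow> bool" where
  "asymptotically_constant f \<longleftrightarrow>
     (\<exists>a b. (f \<longlongrightarrow> a) at_top \<and> (f \<longlongrightarrow> b) at_bot)"

definition parnn_g ::
  "nat \<Rightarrow> (real \<Rightarrow> real) \<Rightarrow> real \<Rightarrow> (nat \<Rightarrow> real) \<Rightarrow> (nat \<Rightarrow> real) \<Rightarrow> (nat \<Rightarrow> real)
   \<Rightarrow> (nat \<Rightarrow> real) \<Rightarrow> real \<Rightarrow> real \<Rightarrow> real" where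
  "parnn_g k G \<nu> \<beta> \<phi>1 \<phi>2 \<mu> y e =
     \<nu> + (\<Sum>i=1..k. \<beta> i * G (\<phi>1 i * y + \<phi>2 i * e + \<mu> i))"

text \<open>One step of the state-space recursion x_t = Psi x_{t-1} + F(x_{t-1}) + Sigma eps_t,
  with x = (y,e), Psi = [[psi1,psi2],[0,0]], F(y,e) = (g(y,e),0), Sigma = (1,1).\<close>
definition chain_step ::
  "real \<Rightarrow> real \<Rightarrow> (real \<Rightarrow> real \<Rightarrow> real) \<Rightarrow> real \<times> real \<Rightarrow> real \<Rightarrow> real \<times> real" where
  "chain_step \<psi>1 \<psi>2 g x \<epsilon> =
     (\<psi>1 * fst x + \<psi>2 * snd x + g (fst x) (snd x) + \<epsilon>, \<epsilon>)"

text \<open>t-step transition probability P^t(x,A) of the chain, when the innovations are i.i.d.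
  with Lebesgue density dens (recursion on the first step, Chapman-Kolmogorov).\<close>
fun trans_prob ::
  "(real \<Rightarrow> real) \<Rightarrow> (real \<times> real \<Rightarrow> real \<Rightarrow> real \<times> real) \<Rightarrow> nat
   \<Rightarrow> real \<times> real \<Rightarrow> (real \<times> real) set \<Rightarrow> ennreal" where
  "trans_prob dens step 0 x A = indicator A x"
| "trans_prob dens step (Suc t) x A =
     (\<integral>\<^sup>+ \<epsilon>. ennreal (dens \<epsilon>) * trans_prob dens step t (step x \<epsilon>) A \<partial>lborel)"

definition irreducible_chain ::
  "(nat \<Rightarrow> real \<times> real \<Rightarrow> (real \<times> real) set \<Rightarrow> ennreal) \<Rightarrow> bool" where
  "irreducible_chain P \<longleftrightarrow>
     (\<forall>x A. A \<in> sets (borel :: (real \<times> real) measure) \<and> emeasure lborel A > 0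
        \<longrightarrow> (\<Sum>t. P (Suc t) x A) > 0)"

end

theory Submission
  imports Defs
begin

(* Two innovations already reach every set of positive Lebesgue measure. From a state x the
   state after two steps is Phi(e1, e2) = (u e1 + e2, e2), where u s = (psi1 + psi2) s plus a
   bounded continuous term; since psi1 + psi2 <> 0, u is onto R, so Phi is onto R^2. Phi is
   differentiable, and differentiable maps of R^2 into itself send null sets to null sets, so
   the preimage under Phi of a set of positive measure has positive measure. As the density is
   positive everywhere, the two-step transition probability of that set is positive. *)

lemma C_infinity_imp_differentiable:
  assumes "C_infinity f"
  shows "f differentiable (at x)"
  using assms real_differentiable_def unfolding C_infinity_def by metis

lemma parnn_g_differentiable:
  assumes "\<And>x. G differentiable (at x)"
  shows "(\<lambda>z. parnn_g k G \<nu> \<beta> \<phi>1 \<phi>2 \<mu> (fst z) (snd z)) differentiable (at z)"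
proof -
  have "(\<lambda>z. G (\<phi>1 i * fst z + \<phi>2 i * snd z + \<mu> i)) differentiable (at z)" for i
    by (rule differentiable_compose[OF assms])
       (auto intro!: derivative_intros
          intro: bounded_linear_imp_differentiable bounded_linear_fst bounded_linear_snd)
  then show ?thesis
    unfolding parnn_g_def by (auto intro!: derivative_intros)
qed

lemma parnn_g_bounded:
  assumes "bounded (range G)"
  shows "\<exists>M. \<forall>y e. \<bar>parnn_g k G \<nu> \<beta> \<phi>1 \<phi>2 \<mu> y e\<bar> \<le> M"
proof -
  obtain B where B: "\<And>x. \<bar>G x\<bar> \<le> B"
    using assms by (auto simp: bounded_iff)
  have "\<bar>parnn_g k G \<nu> \<beta> \<phi>1 \<phi>2 \<mu> y e\<bar> \<le> \<bar>\<nu>\<bar> + (\<Sum>i=1..k. \<bar>\<beta> i\<bar> * B)" for y e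
  proof -
    have "\<bar>parnn_g k G \<nu> \<beta> \<phi>1 \<phi>2 \<mu> y e\<bar>
        \<le> \<bar>\<nu>\<bar> + (\<Sum>i=1..k. \<bar>\<beta> i * G (\<phi>1 i * y + \<phi>2 i * e + \<mu> i)\<bar>)"
      unfolding parnn_g_def using abs_triangle_ineq sum_abs add_left_mono order_trans by blast
    also have "\<dots> \<le> \<bar>\<nu>\<bar> + (\<Sum>i=1..k. \<bar>\<beta> i\<bar> * B)"
      by (intro add_left_mono sum_mono) (auto simp: abs_mult B mult_left_mono)
    finally show ?thesis .
  qed
  then show ?thesis by blast
qed

lemma surj_if_bounded_distance_to_linear:
  fixes u :: "real \<Rightarrow> real"
  assumes cont: "continuous_on UNIV u" and "c \<noteq> 0" and near: "\<And>s. \<bar>u s - c * s\<bar> \<le> M"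
  shows "surj u"
proof -
  have interval: "connected (range u)"
    using connected_continuous_image[OF cont connected_UNIV] .
  have "a \<in> range u" for a
  proof -
    have "u ((a - M) / c) \<le> a" and "a \<le> u ((a + M) / c)"
      using near[of "(a - M) / c"] near[of "(a + M) / c"] \<open>c \<noteq> 0\<close> by auto
    then show ?thesis
      using interval unfolding connected_iff_interval by blast
  qed
  then show ?thesis by blast
qed

definition two_step_map ::
  "(real \<times> real \<Rightarrow> real \<Rightarrow> real \<times> real) \<Rightarrow> real \<times> real \<Rightarrow> real \<times> real \<Rightarrow> real \<times> real" where
  "two_step_map step x \<epsilon> = step (step x (fst \<epsilon>)) (snd \<epsilon>)"

lemma two_step_map_chain_step:
  assumes "h = fst (chain_step \<psi>1 \<psi>2 g x 0)"
  shows "two_step_map (chain_step \<psi>1 \<psi>2 g) x \<epsilon> =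
    (\<psi>1 * (h + fst \<epsilon>) + \<psi>2 * fst \<epsilon> + g (h + fst \<epsilon>) (fst \<epsilon>) + snd \<epsilon>, snd \<epsilon>)"
  using assms by (simp add: two_step_map_def chain_step_def)

lemma two_step_map_chain_step_differentiable:
  assumes "\<And>z. (\<lambda>z. g (fst z) (snd z)) differentiable (at z)"
  shows "two_step_map (chain_step \<psi>1 \<psi>2 g) x differentiable_on UNIV"
proof -
  define h where "h = fst (chain_step \<psi>1 \<psi>2 g x 0)"
  have "(\<lambda>\<epsilon>. g (h + fst \<epsilon>) (fst \<epsilon>)) differentiable (at \<epsilon>)" for \<epsilon> :: "real \<times> real"
  proof -
    have "(\<lambda>\<epsilon>. (h + fst \<epsilon>, fst \<epsilon>)) differentiable (at \<epsilon>)"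
      by (auto intro!: derivative_intros intro: bounded_linear_imp_differentiable bounded_linear_fst)
    then show ?thesis
      using differentiable_compose[OF assms, of "\<lambda>\<epsilon>. (h + fst \<epsilon>, fst \<epsilon>)" \<epsilon> UNIV] by simp
  qed
  then show ?thesis
    unfolding two_step_map_chain_step[OF h_def]
    by (auto intro!: differentiable_at_imp_differentiable_on derivative_intros
        intro: bounded_linear_imp_differentiable bounded_linear_fst bounded_linear_snd)
qed

lemma two_step_map_chain_step_surj:
  assumes cont: "continuous_on UNIV (\<lambda>z. g (fst z) (snd z))"
    and bound: "\<And>y e. \<bar>g y e\<bar> \<le> M" and "\<psi>1 + \<psi>2 \<noteq> 0"
  shows "surj (two_step_map (chain_step \<psi>1 \<psi>2 g) x)"
proof -
  define h where "h = fst (chain_step \<psi>1 \<psi>2 g x 0)"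
  define u where "u s = \<psi>1 * (h + s) + \<psi>2 * s + g (h + s) s" for s
  have two_step:
    "two_step_map (chain_step \<psi>1 \<psi>2 g) x = (\<lambda>\<epsilon>. (u (fst \<epsilon>) + snd \<epsilon>, snd \<epsilon>))"
    by (simp add: fun_eq_iff two_step_map_chain_step[OF h_def] u_def)
  have "continuous_on UNIV u"
    unfolding u_def
    by (intro continuous_intros continuous_on_compose2[OF cont, of _ "\<lambda>s. (h + s, s)", simplified])
  moreover have "\<bar>u s - (\<psi>1 + \<psi>2) * s\<bar> \<le> \<bar>\<psi>1 * h\<bar> + M" for s
    using bound[of "h + s" s] by (simp add: u_def algebra_simps)
  ultimately have "surj u"
    using surj_if_bounded_distance_to_linear \<open>\<psi>1 + \<psi>2 \<noteq> 0\<close> by blast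
  have "(a, b) \<in> range (\<lambda>\<epsilon>. (u (fst \<epsilon>) + snd \<epsilon>, snd \<epsilon>))" for a b
  proof -
    obtain s where "u s = a - b" using \<open>surj u\<close> by (metis surjD)
    then show ?thesis by (intro image_eqI[of _ _ "(s, b)"]) auto
  qed
  then show ?thesis
    unfolding two_step by auto
qed

lemma negligible_iff_emeasure_lborel0:
  "A \<in> sets borel \<Longrightarrow> negligible A \<longleftrightarrow> emeasure lborel A = 0"
  by (simp add: negligible_iff_null_sets null_sets_completion_iff null_sets_def)

lemma emeasure_vimage_pos_if_differentiable_surj:
  fixes \<Phi> :: "'a::euclidean_space \<Rightarrow> 'a"
  assumes diff: "\<Phi> differentiable_on UNIV" and "surj \<Phi>"
    and A: "A \<in> sets borel" and "emeasure lborel A > 0"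
  shows "emeasure lborel (\<Phi> -` A) > 0"
proof -
  have "\<Phi> \<in> borel_measurable borel"
    by (rule borel_measurable_continuous_onI[OF differentiable_imp_continuous_on[OF diff]])
  then have vimage_borel: "\<Phi> -` A \<in> sets borel"
    using A by (rule measurable_sets_borel)
  have "negligible (\<Phi> ` (\<Phi> -` A))" if "negligible (\<Phi> -` A)"
    by (rule negligible_differentiable_image_negligible[OF order_refl that
          differentiable_on_subset[OF diff subset_UNIV]])
  moreover have "\<Phi> ` (\<Phi> -` A) = A"
    using \<open>surj \<Phi>\<close> by (simp add: surj_image_vimage_eq)
  ultimately show ?thesis
    using assms vimage_borel by (auto simp: negligible_iff_emeasure_lborel0 zero_less_iff_neq_zero)
qed

lemma nn_integral_pos_if_pos_on:
  fixes f :: "'a \<Rightarrow> ennreal"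
  assumes f: "f \<in> borel_measurable M" and N: "N \<in> sets M" "emeasure M N > 0"
    and pos: "\<And>z. z \<in> N \<Longrightarrow> f z > 0"
  shows "integral\<^sup>N M f > 0"
proof (rule ccontr)
  assume "\<not> integral\<^sup>N M f > 0"
  then have "AE z in M. f z = 0"
    using f by (simp add: nn_integral_0_iff_AE zero_less_iff_neq_zero)
  then have "AE z in M. z \<notin> N"
    by eventually_elim (use pos in force)
  then have "emeasure M N = 0"
    using AE_iff_measurable[of N M "\<lambda>z. z \<notin> N"] N sets.sets_into_space by auto
  with N show False by simp
qed

lemma trans_prob_2_eq_nn_integral:
  assumes [measurable]: "dens \<in> borel_measurable borel" "A \<in> sets borel"
    and step2_meas: "two_step_map step x \<in> borel_measurable borel"
  shows "trans_prob dens step 2 x A =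
    (\<integral>\<^sup>+\<epsilon>. ennreal (dens (fst \<epsilon>)) * ennreal (dens (snd \<epsilon>)) *
       indicator A (two_step_map step x \<epsilon>) \<partial>lborel)"
proof -
  have [measurable]: "two_step_map step x \<in> borel_measurable (lborel \<Otimes>\<^sub>M lborel)"
    using step2_meas by (simp add: lborel_prod)
  define f where "f = (\<lambda>\<epsilon>. ennreal (dens (fst \<epsilon>)) * ennreal (dens (snd \<epsilon>)) *
    indicator A (two_step_map step x \<epsilon>))"
  have f_meas: "f \<in> borel_measurable (lborel \<Otimes>\<^sub>M lborel)"
    unfolding f_def by measurable
  have "trans_prob dens step 2 x A =
      (\<integral>\<^sup>+e1. ennreal (dens e1) *
         (\<integral>\<^sup>+e2. ennreal (dens e2) * indicator A (two_step_map step x (e1, e2)) \<partial>lborel) \<partial>lborel)"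
    by (simp add: numeral_2_eq_2 two_step_map_def)
  also have "\<dots> = (\<integral>\<^sup>+e1. \<integral>\<^sup>+e2. f (e1, e2) \<partial>lborel \<partial>lborel)"
    by (intro nn_integral_cong) (simp add: f_def mult.assoc nn_integral_cmult)
  also have "\<dots> = integral\<^sup>N (lborel \<Otimes>\<^sub>M lborel) f"
    using f_meas by (rule lborel.nn_integral_fst)
  finally show ?thesis
    by (simp add: lborel_prod f_def)
qed

lemma trans_prob_2_pos:
  assumes dens_meas: "dens \<in> borel_measurable borel" and dens_pos: "\<And>\<epsilon>. dens \<epsilon> > 0"
    and A: "A \<in> sets borel" and step2_meas: "two_step_map step x \<in> borel_measurable borel"
    and vimage_pos: "emeasure lborel (two_step_map step x -` A) > 0"
  shows "trans_prob dens step 2 x A > 0"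
proof -
  have [measurable]: "two_step_map step x \<in> borel_measurable (lborel \<Otimes>\<^sub>M lborel)"
    using step2_meas by (simp add: lborel_prod)
  define f where "f = (\<lambda>\<epsilon>. ennreal (dens (fst \<epsilon>)) * ennreal (dens (snd \<epsilon>)) *
    indicator A (two_step_map step x \<epsilon>))"
  have "f \<in> borel_measurable (lborel \<Otimes>\<^sub>M lborel)"
    unfolding f_def using A dens_meas by measurable
  then have "f \<in> borel_measurable lborel"
    by (simp add: lborel_prod)
  moreover have "two_step_map step x -` A \<in> sets lborel"
    using measurable_sets_borel[OF step2_meas A] by simp
  ultimately show ?thesis
    unfolding trans_prob_2_eq_nn_integral[OF dens_meas A step2_meas] f_def[symmetric]
    using vimage_pos
    by (intro nn_integral_pos_if_pos_on) (auto simp: f_def dens_pos ennreal_zero_less_mult_iff)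
qed

lemma irreducible_chainI:
  assumes "\<And>x A. A \<in> sets borel \<Longrightarrow> emeasure lborel A > 0 \<Longrightarrow> \<exists>t. P (Suc t) x A > 0"
  shows "irreducible_chain P"
  unfolding irreducible_chain_def
proof (intro allI impI, elim conjE)
  fix x :: "real \<times> real" and A :: "(real \<times> real) set"
  assume "A \<in> sets borel" "emeasure lborel A > 0"
  then obtain t where "P (Suc t) x A > 0"
    using assms by blast
  also have "P (Suc t) x A \<le> (\<Sum>t. P (Suc t) x A)"
    using sum_le_suminf[OF summableI, of "{t}" "\<lambda>t. P (Suc t) x A"] by simp
  finally show "(\<Sum>t. P (Suc t) x A) > 0" .
qed

theorem theorem1:
  fixes k :: nat and G :: "real \<Rightarrow> real"
    and \<psi>1 \<psi>2 \<nu> :: real and \<beta> \<phi>1 \<phi>2 \<mu> :: "nat \<Rightarrow> real"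
    and dens :: "real \<Rightarrow> real"
  assumes "k \<ge> 1"
    and dens_meas: "dens \<in> borel_measurable lborel"
    and dens_prob: "(\<integral>\<^sup>+ \<epsilon>. ennreal (dens \<epsilon>) \<partial>lborel) = 1"
    and dens_pos: "\<forall>\<epsilon>. dens \<epsilon> > 0"
    and dens_lsc: "lower_semicontinuous_everywhere dens"
    and G_smooth: "C_infinity G"
    and G_bounded: "bounded (range G)"
    and G_nonconst: "\<not> (\<exists>c. \<forall>x. G x = c)"
    and G_asym: "asymptotically_constant G"
    and psi: "\<psi>1 + \<psi>2 \<noteq> 0"
  shows "irreducible_chain
           (trans_prob dens (chain_step \<psi>1 \<psi>2 (parnn_g k G \<nu> \<beta> \<phi>1 \<phi>2 \<mu>)))"
proof (rule irreducible_chainI)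
  let ?g = "parnn_g k G \<nu> \<beta> \<phi>1 \<phi>2 \<mu>"
  fix x :: "real \<times> real" and A :: "(real \<times> real) set"
  assume A: "A \<in> sets borel" and A_pos: "emeasure lborel A > 0"
  have g_diff: "(\<lambda>z. ?g (fst z) (snd z)) differentiable (at z)" for z
    using parnn_g_differentiable C_infinity_imp_differentiable[OF G_smooth] by blast
  then have g_cont: "continuous_on UNIV (\<lambda>z. ?g (fst z) (snd z))"
    by (simp add: differentiable_at_imp_differentiable_on differentiable_imp_continuous_on)
  obtain M where g_bound: "\<And>y e. \<bar>?g y e\<bar> \<le> M"
    using parnn_g_bounded[OF G_bounded] by blast
  have "two_step_map (chain_step \<psi>1 \<psi>2 ?g) x differentiable_on UNIV"
    using g_diff by (rule two_step_map_chain_step_differentiable)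
  moreover have "surj (two_step_map (chain_step \<psi>1 \<psi>2 ?g) x)"
    using g_cont g_bound psi by (rule two_step_map_chain_step_surj)
  ultimately have "two_step_map (chain_step \<psi>1 \<psi>2 ?g) x \<in> borel_measurable borel"
    and "emeasure lborel (two_step_map (chain_step \<psi>1 \<psi>2 ?g) x -` A) > 0"
    using emeasure_vimage_pos_if_differentiable_surj A A_pos
    by (auto intro: borel_measurable_continuous_onI differentiable_imp_continuous_on)
  then have "trans_prob dens (chain_step \<psi>1 \<psi>2 ?g) 2 x A > 0"
    using trans_prob_2_pos dens_meas dens_pos A by simp
  then show "\<exists>t. trans_prob dens (chain_step \<psi>1 \<psi>2 ?g) (Suc t) x A > 0"
    by (metis Suc_1)
qed

end
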